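(* Let $G$ be a finite, simple, undirected, connected graph with $n$ vertices and let $\ell$ be an integer with $1\leq \ell\leq n-1$. Then $\beta_\ell^s(G)\geq \ell+1$.
   Context: $d$ is the shortest-path distance; for nonempty $X\subseteq V(G)$, $d(s,X)=\min_{x\in X}d(s,x)$; for $S=\{s_1,\dots,s_k\}$, $\mathcal{D}_S(X)=(d(s_1,X),\dots,d(s_k,X))$. $S\subseteq V(G)$ is an $\ell$-solid-resolving set if $\mathcal{D}_S(X)\neq\mathcal{D}_S(Y)$ for all distinct nonempty $X,Y\subseteq V(G)$ with $|X|\leq\ell$ ($Y$ of arbitrary size). $\beta_\ell^s(G)$, the $\ell$-solid-metric dimension, is the minimum cardinality of an $\ell$-solid-resolving set of $G$. *)

theory Defs
  imports Main
begin

definition simple_graph :: "'a set \<Rightarrow> ('a \<Rightarrow> 'a \<Rightarrow> bool) \<Rightarrow> bool" where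
  "simple_graph V E \<longleftrightarrow> finite V \<and> (\<forall>x y. E x y \<longrightarrow> x \<in> V \<and> y \<in> V)
     \<and> (\<forall>x y. E x y \<longrightarrow> E y x) \<and> (\<forall>x. \<not> E x x)"

definition is_walk :: "'a set \<Rightarrow> ('a \<Rightarrow> 'a \<Rightarrow> bool) \<Rightarrow> 'a list \<Rightarrow> bool" where
  "is_walk V E xs \<longleftrightarrow> xs \<noteq> [] \<and> set xs \<subseteq> V \<and>
     (\<forall>i. Suc i < length xs \<longrightarrow> E (xs ! i) (xs ! Suc i))"

definition connected_graph :: "'a set \<Rightarrow> ('a \<Rightarrow> 'a \<Rightarrow> bool) \<Rightarrow> bool" where
  "connected_graph V E \<longleftrightarrow> (\<forall>u\<in>V. \<forall>v\<in>V. \<exists>xs. is_walk V E xs \<and> hd xs = u \<and> last xs = v)"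

definition gdist :: "'a set \<Rightarrow> ('a \<Rightarrow> 'a \<Rightarrow> bool) \<Rightarrow> 'a \<Rightarrow> 'a \<Rightarrow> nat" where
  "gdist V E u v = (LEAST n. \<exists>xs. is_walk V E xs \<and> hd xs = u \<and> last xs = v \<and> length xs = Suc n)"

definition setdist :: "'a set \<Rightarrow> ('a \<Rightarrow> 'a \<Rightarrow> bool) \<Rightarrow> 'a \<Rightarrow> 'a set \<Rightarrow> nat" where
  "setdist V E s X = Min ((gdist V E s) ` X)"

definition dist_vec :: "'a set \<Rightarrow> ('a \<Rightarrow> 'a \<Rightarrow> bool) \<Rightarrow> 'a set \<Rightarrow> 'a set \<Rightarrow> ('a \<Rightarrow> nat)" where
  "dist_vec V E S X = (\<lambda>s. if s \<in> S then setdist V E s X else 0)"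

definition solid_resolving :: "'a set \<Rightarrow> ('a \<Rightarrow> 'a \<Rightarrow> bool) \<Rightarrow> nat \<Rightarrow> 'a set \<Rightarrow> bool" where
  "solid_resolving V E l S \<longleftrightarrow> S \<subseteq> V \<and>
     (\<forall>X Y. X \<subseteq> V \<and> Y \<subseteq> V \<and> X \<noteq> {} \<and> Y \<noteq> {} \<and> X \<noteq> Y \<and> card X \<le> l
        \<longrightarrow> dist_vec V E S X \<noteq> dist_vec V E S Y)"

definition solid_metric_dim :: "'a set \<Rightarrow> ('a \<Rightarrow> 'a \<Rightarrow> bool) \<Rightarrow> nat \<Rightarrow> nat" where
  "solid_metric_dim V E l = (LEAST k. \<exists>S. solid_resolving V E l S \<and> card S = k)"

end

theory Submission
  imports Defs
begin

text \<open>Distance 0 detects membership, so the distance vector to all of \<open>V\<close> determines \<open>X\<close> and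
  \<open>V\<close> is an \<open>\<ell>\<close>-solid-resolving set; hence the \<open>\<ell>\<close>-solid-metric dimension is attained.
  Conversely, if \<open>|S| \<le> \<ell>\<close>, take a nonempty \<open>X \<supseteq> S\<close> with \<open>|X| \<le> \<ell>\<close> (\<open>S\<close> itself, or a single
  vertex if \<open>S = {}\<close>): both \<open>X\<close> and \<open>V\<close> have the all-zero distance vector on \<open>S\<close>, yet
  \<open>X \<noteq> V\<close> because \<open>|V| > \<ell>\<close>.\<close>

lemma gdist_self:
  assumes "v \<in> V"
  shows "gdist V E v v = 0"
proof -
  have "is_walk V E [v]" using assms by (simp add: is_walk_def)
  then show ?thesis unfolding gdist_def
    by (intro Least_eq_0) (rule exI[of _ "[v]"], simp)
qed

text \<open>Connectedness is needed: without a walk from \<open>u\<close> to \<open>v\<close>, \<open>gdist\<close> is an unspecified \<open>LEAST\<close>.\<close>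
lemma gdist_eq_0_imp_eq:
  assumes "connected_graph V E" "u \<in> V" "v \<in> V" "gdist V E u v = 0"
  shows "u = v"
proof -
  obtain xs where "is_walk V E xs" "hd xs = u" "last xs = v"
    using assms(1-3) unfolding connected_graph_def by blast
  then have "\<exists>n xs. is_walk V E xs \<and> hd xs = u \<and> last xs = v \<and> length xs = Suc n"
    by (metis is_walk_def length_greater_0_conv Suc_pred)
  then have "\<exists>xs. is_walk V E xs \<and> hd xs = u \<and> last xs = v \<and> length xs = Suc (gdist V E u v)"
    unfolding gdist_def by (rule LeastI_ex)
  then obtain ys where "hd ys = u" "last ys = v" "length ys = 1"
    using assms(4) by auto
  then show ?thesis
    by (metis One_nat_def hd_conv_nth last_conv_nth length_0_conv diff_Suc_1 zero_neq_one)
qed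

lemma setdist_eq_0_if_mem:
  assumes "finite X" "v \<in> X" "v \<in> V"
  shows "setdist V E v X = 0"
proof -
  have "0 \<in> gdist V E v ` X" using gdist_self assms(2,3) by (metis image_eqI)
  then show ?thesis unfolding setdist_def
    by (metis Min_le assms(1) finite_imageI le_zero_eq)
qed

lemma setdist_eq_0_iff:
  assumes "connected_graph V E" "finite X" "X \<subseteq> V" "X \<noteq> {}" "v \<in> V"
  shows "setdist V E v X = 0 \<longleftrightarrow> v \<in> X"
proof
  assume "setdist V E v X = 0"
  then have "0 \<in> gdist V E v ` X" unfolding setdist_def
    by (metis Min_in assms(2,4) finite_imageI image_is_empty)
  then obtain x where "x \<in> X" "gdist V E v x = 0" by auto
  then show "v \<in> X" using gdist_eq_0_imp_eq[OF assms(1,5)] assms(3) by blast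
next
  assume "v \<in> X"
  then show "setdist V E v X = 0" by (rule setdist_eq_0_if_mem[OF assms(2) _ assms(5)])
qed

lemma dist_vec_eq_0_if_subset:
  assumes "S \<subseteq> X" "X \<subseteq> V" "finite X"
  shows "dist_vec V E S X = (\<lambda>_. 0)"
proof
  fix s
  show "dist_vec V E S X s = 0"
    using assms setdist_eq_0_if_mem[OF assms(3), of s V E] by (auto simp: dist_vec_def)
qed

lemma solid_resolving_vertex_set:
  assumes "connected_graph V E" "finite V"
  shows "solid_resolving V E l V"
  unfolding solid_resolving_def
proof (intro conjI allI impI)
  fix X Y
  assume XY: "X \<subseteq> V \<and> Y \<subseteq> V \<and> X \<noteq> {} \<and> Y \<noteq> {} \<and> X \<noteq> Y \<and> card X \<le> l"
  then have "finite X" "finite Y" using assms(2) finite_subset by auto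
  have "v \<in> X \<longleftrightarrow> v \<in> Y" if "v \<in> V" "dist_vec V E V X = dist_vec V E V Y" for v
  proof -
    have "setdist V E v X = setdist V E v Y"
      using fun_cong[OF that(2), of v] that(1) by (simp add: dist_vec_def)
    then show ?thesis
      using setdist_eq_0_iff[OF assms(1) \<open>finite X\<close> _ _ that(1)]
        setdist_eq_0_iff[OF assms(1) \<open>finite Y\<close> _ _ that(1)] XY by simp
  qed
  then show "dist_vec V E V X \<noteq> dist_vec V E V Y" using XY by blast
qed simp

lemma not_solid_resolving_if_card_le:
  assumes "finite V" "1 \<le> l" "l < card V" "card S \<le> l"
  shows "\<not> solid_resolving V E l S"
proof
  assume resolving: "solid_resolving V E l S"
  then have "S \<subseteq> V" by (simp add: solid_resolving_def)
  obtain X where X: "S \<subseteq> X" "X \<subseteq> V" "X \<noteq> {}" "card X \<le> l"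
  proof (cases "S = {}")
    case True
    obtain v where "v \<in> V" using assms(3) by fastforce
    then show ?thesis using that[of "{v}"] True assms(2) by auto
  next
    case False
    then show ?thesis using that[of S] \<open>S \<subseteq> V\<close> assms(4) by simp
  qed
  have "X \<noteq> V" using X(4) assms(3) by auto
  with resolving X(2-4) have "dist_vec V E S X \<noteq> dist_vec V E S V"
    unfolding solid_resolving_def by blast
  moreover have "dist_vec V E S X = dist_vec V E S V"
    using dist_vec_eq_0_if_subset[OF X(1,2)] dist_vec_eq_0_if_subset[OF \<open>S \<subseteq> V\<close> order_refl]
      assms(1) finite_subset[OF X(2)] by simp
  ultimately show False by blast
qed

theorem mainTheorem5:
  fixes V :: "'a set" and E :: "'a \<Rightarrow> 'a \<Rightarrow> bool" and l :: nat
  assumes "simple_graph V E" and "connected_graph V E"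
    and "1 \<le> l" and "l \<le> card V - 1"
  shows "solid_metric_dim V E l \<ge> l + 1"
proof -
  have "finite V" using assms(1) by (simp add: simple_graph_def)
  have "l < card V" using assms(3,4) by linarith
  have "\<exists>k S. solid_resolving V E l S \<and> card S = k"
    using solid_resolving_vertex_set[OF assms(2) \<open>finite V\<close>] by blast
  then show ?thesis
    unfolding solid_metric_dim_def
  proof (rule LeastI2_ex)
    fix k assume "\<exists>S. solid_resolving V E l S \<and> card S = k"
    then obtain S where "solid_resolving V E l S" "card S = k" by blast
    then have "\<not> card S \<le> l"
      using not_solid_resolving_if_card_le[OF \<open>finite V\<close> assms(3) \<open>l < card V\<close>] by blast
    then show "l + 1 \<le> k" using \<open>card S = k\<close> by simp
  qed
qed

end
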